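(* For every $\varepsilon>0$ there exist constants $b>1$, $c\in(0,2\sqrt b)$, $C>0$ with $C<(\pi+\varepsilon)\,c\sqrt b$, and a function $a\in L^\infty(\mathbb{R}^+)$ with $0\le a(t)\le C$ for almost every $t\ge 0$, such that the equation $$u''(t)+c\,u'(t)+\big(b+a(t)\big)u(t)=0\quad\text{for a.e. } t\ge 0$$ has a solution $u\in W^{2,\infty}_{\mathrm{loc}}(\mathbb{R}^+)$ which is unbounded on $\mathbb{R}^+=[0,\infty)$. *)

theory Defs
  imports "HOL-Analysis.Analysis"
begin

text \<open>u belongs to W^{2,infinity}_loc([0,infinity)) with first derivative u1 and
  (a.e.) second derivative u2: u is differentiable on [0,infinity) with derivative u1,
  u1 is Lipschitz on every bounded interval [0,T], and u2 is the a.e. derivative of u1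
  (which equals the weak derivative of u1, automatically in L^infinity_loc).\<close>
definition W2inf_loc :: "(real \<Rightarrow> real) \<Rightarrow> (real \<Rightarrow> real) \<Rightarrow> (real \<Rightarrow> real) \<Rightarrow> bool" where
  "W2inf_loc u u1 u2 \<longleftrightarrow>
     (\<forall>t\<ge>0. (u has_real_derivative u1 t) (at t within {0..})) \<and>
     (\<forall>T\<ge>0. \<exists>L. \<forall>s\<in>{0..T}. \<forall>t\<in>{0..T}. \<bar>u1 s - u1 t\<bar> \<le> L * \<bar>s - t\<bar>) \<and>
     (AE t in lebesgue_on {0..}. (u1 has_real_derivative u2 t) (at t within {0..}))"

end

theory Submission
  imports Defs
begin

(*
  The coefficient switches once per period between 1 + C and 1.  With \<omega> = sqrt (1 + C), a
  quarter turn of the fast oscillation cos (\<omega> t) takes (w, w') from (1, 0) to (0, -\<omega>), and a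
  quarter turn of the slow oscillation then takes it to (-\<omega>, 0).  Hence w'' + (1 + a) w = 0 has
  a solution with w (t + \<tau>) = -\<omega> w t, where \<tau> = \<pi> / (2 \<omega>) + \<pi> / 2 < \<pi>.  The substitution
  u = exp (- c t / 2) w turns this into u'' + c u' + (1 + c\<^sup>2/4 + a) u = 0, and u grows by the
  factor \<omega> exp (- c \<tau> / 2) per period.  This factor exceeds 1 as soon as exp (c \<pi>) < 1 + C,
  which holds for C = (\<pi> + \<delta>) c when c is small compared to \<delta>.
*)

definition frac_period :: "real \<Rightarrow> real \<Rightarrow> real" where
  "frac_period \<tau> t = t - \<tau> * of_int \<lfloor>t / \<tau>\<rfloor>"

definition twisted_ext :: "real \<Rightarrow> real \<Rightarrow> (real \<Rightarrow> real) \<Rightarrow> real \<Rightarrow> real" where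
  "twisted_ext \<tau> m f t = m powi \<lfloor>t / \<tau>\<rfloor> * f (frac_period \<tau> t)"

lemma frac_period_eq_frac: "\<tau> > 0 \<Longrightarrow> frac_period \<tau> t = \<tau> * frac (t / \<tau>)"
  by (simp add: frac_period_def frac_def algebra_simps)

lemma frac_period_bounds:
  assumes "\<tau> > 0" shows "0 \<le> frac_period \<tau> t" "frac_period \<tau> t < \<tau>"
  using assms frac_lt_1[of "t / \<tau>"] by (simp_all add: frac_period_eq_frac)

lemma floor_add_periods:
  assumes "\<tau> > 0" shows "\<lfloor>(t + of_int k * \<tau>) / \<tau>\<rfloor> = \<lfloor>t / \<tau>\<rfloor> + k"
proof -
  have "(t + of_int k * \<tau>) / \<tau> = t / \<tau> + of_int k" using assms by (simp add: field_simps)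
  then show ?thesis by simp
qed

lemma frac_period_add_periods:
  assumes "\<tau> > 0" shows "frac_period \<tau> (t + of_int k * \<tau>) = frac_period \<tau> t"
  by (simp only: frac_period_def floor_add_periods[OF assms]) (simp add: algebra_simps)

lemma twisted_ext_add_periods:
  assumes "\<tau> > 0" "m \<noteq> 0"
  shows "twisted_ext \<tau> m f (t + of_int k * \<tau>) = m powi k * twisted_ext \<tau> m f t"
  unfolding twisted_ext_def frac_period_add_periods[OF assms(1)] floor_add_periods[OF assms(1)]
  using assms(2) by (simp add: power_int_add)

lemma twisted_ext_base:
  assumes "0 \<le> s" "s < \<tau>" shows "twisted_ext \<tau> m f s = f s"
proof -
  have "\<lfloor>s / \<tau>\<rfloor> = 0" using assms by (simp add: floor_eq_iff)
  then show ?thesis by (simp add: twisted_ext_def frac_period_def)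
qed

lemma twisted_ext_before_0:
  assumes "- \<tau> \<le> s" "s < 0" "m \<noteq> 0"
  shows "twisted_ext \<tau> m f s = inverse m * f (s + \<tau>)"
proof -
  have "\<tau> > 0" using assms(1,2) by linarith
  with assms have "\<lfloor>s / \<tau>\<rfloor> = -1" by (simp add: floor_eq_iff field_simps)
  then show ?thesis by (simp add: twisted_ext_def frac_period_def power_int_minus)
qed

lemma twisted_ext_translate:
  assumes "\<tau> > 0" "m \<noteq> 0"
  shows "twisted_ext \<tau> m f = (\<lambda>x. m powi k * twisted_ext \<tau> m f (x - of_int k * \<tau>))"
proof
  fix x
  show "twisted_ext \<tau> m f x = m powi k * twisted_ext \<tau> m f (x - of_int k * \<tau>)"
    using twisted_ext_add_periods[OF assms, of f "x - of_int k * \<tau>" k] by simp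
qed

lemma twisted_ext_has_derivative:
  assumes "\<tau> > 0" "m \<noteq> 0"
    and "(twisted_ext \<tau> m f has_real_derivative D) (at (frac_period \<tau> t))"
  shows "(twisted_ext \<tau> m f has_real_derivative m powi \<lfloor>t / \<tau>\<rfloor> * D) (at t)"
proof -
  let ?k = "\<lfloor>t / \<tau>\<rfloor>"
  have "frac_period \<tau> t = t + - (of_int ?k * \<tau>)"
    by (simp add: frac_period_def)
  with assms(3) have "((\<lambda>x. twisted_ext \<tau> m f (x + - (of_int ?k * \<tau>))) has_real_derivative D) (at t)"
    by (simp only: DERIV_shift)
  then have "((\<lambda>x. m powi ?k * twisted_ext \<tau> m f (x + - (of_int ?k * \<tau>))) has_real_derivative
      m powi ?k * D) (at t)"
    by (rule DERIV_cmult)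
  then show ?thesis
    by (subst twisted_ext_translate[OF assms(1,2), of _ ?k]) simp
qed

lemma twisted_ext_isCont:
  assumes "\<tau> > 0" "m \<noteq> 0" and "isCont (twisted_ext \<tau> m f) (frac_period \<tau> t)"
  shows "isCont (twisted_ext \<tau> m f) t"
proof -
  let ?k = "\<lfloor>t / \<tau>\<rfloor>"
  have "frac_period \<tau> t = t - of_int ?k * \<tau>"
    by (simp add: frac_period_def)
  with assms(3) have "isCont (\<lambda>x. m powi ?k * twisted_ext \<tau> m f (x - of_int ?k * \<tau>)) t"
    by (intro continuous_intros isCont_o2[where f = "\<lambda>x. x - of_int ?k * \<tau>"]) simp_all
  then show ?thesis
    by (subst twisted_ext_translate[OF assms(1,2), of _ ?k])
qed

lemma has_real_derivative_glue:
  fixes f g h :: "real \<Rightarrow> real"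
  assumes "(g has_real_derivative D) (at x)" "(h has_real_derivative D) (at x)" "e > 0"
    and left: "\<And>y. x - e < y \<Longrightarrow> y \<le> x \<Longrightarrow> f y = g y"
    and right: "\<And>y. x \<le> y \<Longrightarrow> y < x + e \<Longrightarrow> f y = h y"
  shows "(f has_real_derivative D) (at x)"
  unfolding has_field_derivative_iff
proof (rule filterlim_split_at_real)
  have "f x = g x" using left[of x] \<open>e > 0\<close> by simp
  have "f x = h x" using right[of x] \<open>e > 0\<close> by simp
  have "eventually (\<lambda>y. (g y - g x) / (y - x) = (f y - f x) / (y - x)) (at_left x)"
    by (rule eventually_mono[OF eventually_at_left_real[of "x - e" x]])
      (use \<open>e > 0\<close> left \<open>f x = g x\<close> in simp_all)
  moreover have "((\<lambda>y. (g y - g x) / (y - x)) \<longlongrightarrow> D) (at_left x)"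
    using assms(1) unfolding has_field_derivative_iff by (rule filterlim_mono) (simp_all add: at_le)
  ultimately show "((\<lambda>y. (f y - f x) / (y - x)) \<longlongrightarrow> D) (at_left x)"
    by (rule Lim_transform_eventually[rotated])
  have "eventually (\<lambda>y. (h y - h x) / (y - x) = (f y - f x) / (y - x)) (at_right x)"
    by (rule eventually_mono[OF eventually_at_right_real[of x "x + e"]])
      (use \<open>e > 0\<close> right \<open>f x = h x\<close> in simp_all)
  moreover have "((\<lambda>y. (h y - h x) / (y - x)) \<longlongrightarrow> D) (at_right x)"
    using assms(2) unfolding has_field_derivative_iff by (rule filterlim_mono) (simp_all add: at_le)
  ultimately show "((\<lambda>y. (f y - f x) / (y - x)) \<longlongrightarrow> D) (at_right x)"
    by (rule Lim_transform_eventually[rotated])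
qed

lemma isCont_glue:
  fixes f g h :: "real \<Rightarrow> real"
  assumes "isCont g x" "isCont h x" "g x = h x" "e > 0"
    and left: "\<And>y. x - e < y \<Longrightarrow> y \<le> x \<Longrightarrow> f y = g y"
    and right: "\<And>y. x \<le> y \<Longrightarrow> y < x + e \<Longrightarrow> f y = h y"
  shows "isCont f x"
  unfolding isCont_def
proof (rule filterlim_split_at_real)
  have "f x = g x" using left[of x] \<open>e > 0\<close> by simp
  have "f x = h x" using right[of x] \<open>e > 0\<close> by simp
  have "eventually (\<lambda>y. g y = f y) (at_left x)"
    by (rule eventually_mono[OF eventually_at_left_real[of "x - e" x]])
      (use \<open>e > 0\<close> left in simp_all)
  moreover have "(g \<longlongrightarrow> f x) (at_left x)"
    using assms(1) unfolding isCont_def \<open>f x = g x\<close> by (rule filterlim_mono) (simp_all add: at_le)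
  ultimately show "(f \<longlongrightarrow> f x) (at_left x)"
    by (rule Lim_transform_eventually[rotated])
  have "eventually (\<lambda>y. h y = f y) (at_right x)"
    by (rule eventually_mono[OF eventually_at_right_real[of x "x + e"]])
      (use \<open>e > 0\<close> right in simp_all)
  moreover have "(h \<longlongrightarrow> f x) (at_right x)"
    using assms(2) unfolding isCont_def \<open>f x = h x\<close> by (rule filterlim_mono) (simp_all add: at_le)
  ultimately show "(f \<longlongrightarrow> f x) (at_right x)"
    by (rule Lim_transform_eventually[rotated])
qed

lemma abs_diff_le_of_derivative_bound:
  fixes f f' :: "real \<Rightarrow> real"
  assumes "s \<le> t" "finite S" "continuous_on {s..t} f"
    and "\<And>x. x \<in> {s<..<t} - S \<Longrightarrow> (f has_real_derivative f' x) (at x)"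
    and "\<And>x. x \<in> {s..t} \<Longrightarrow> \<bar>f' x\<bar> \<le> K"
  shows "\<bar>f t - f s\<bar> \<le> K * (t - s)"
proof -
  have "(f' has_integral (f t - f s)) (cbox s t)"
    using fundamental_theorem_of_calculus_interior_strong[OF assms(2,1) _ assms(3)] assms(4)
    by (simp add: has_real_derivative_iff_has_vector_derivative)
  moreover have "K \<ge> 0" using assms(1) assms(5)[of s] by force
  ultimately show ?thesis
    using has_integral_bound[of K f' "f t - f s" s t] assms(1,5) by (simp add: content_real)
qed

lemma AE_nonneg_not_in:
  fixes J :: "real set"
  assumes "\<And>T. finite (J \<inter> {0..T})"
  shows "AE t in lebesgue_on {0..}. t \<notin> J"
proof -
  have "J \<inter> {0..} = (\<Union>n. J \<inter> {0..real n})"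
    by (auto intro: real_arch_simple)
  moreover have "countable (\<Union>n. J \<inter> {0..real n})"
    using assms by (intro countable_UN) (simp_all add: countable_finite)
  ultimately have "countable (J \<inter> {0..})" by simp
  then have "AE t in lebesgue. t \<notin> J \<inter> {0..}"
    by (intro AE_completion AE_not_in countable_imp_null_set_lborel)
  then show ?thesis by (subst AE_restrict_space_iff) (auto elim: eventually_mono)
qed

lemma W2inf_loc_intro:
  fixes u u1 u2 :: "real \<Rightarrow> real"
  assumes u_deriv: "\<And>t. (u has_real_derivative u1 t) (at t)"
    and u1_cont: "\<And>t. isCont u1 t"
    and u1_deriv: "\<And>t. t \<notin> J \<Longrightarrow> (u1 has_real_derivative u2 t) (at t)"
    and J_finite: "\<And>T. finite (J \<inter> {0..T})"
    and u2_bounded: "\<And>T. \<exists>K. \<forall>t\<in>{0..T}. \<bar>u2 t\<bar> \<le> K"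
  shows "W2inf_loc u u1 u2"
  unfolding W2inf_loc_def
proof (intro conjI allI impI)
  show "(u has_real_derivative u1 t) (at t within {0..})" for t
    using u_deriv by (rule has_field_derivative_at_within)
  show "\<exists>L. \<forall>s\<in>{0..T}. \<forall>t\<in>{0..T}. \<bar>u1 s - u1 t\<bar> \<le> L * \<bar>s - t\<bar>" for T
  proof -
    obtain K where K: "\<And>t. t \<in> {0..T} \<Longrightarrow> \<bar>u2 t\<bar> \<le> K" using u2_bounded by blast
    have "\<bar>u1 t - u1 s\<bar> \<le> K * (t - s)" if "0 \<le> s" "s \<le> t" "t \<le> T" for s t
      using that J_finite[of T] K
      by (intro abs_diff_le_of_derivative_bound[where S = "J \<inter> {0..T}" and f' = u2] u1_deriv)
        (auto intro: continuous_at_imp_continuous_on u1_cont)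
    then show ?thesis
      by (metis abs_minus_commute abs_of_nonneg abs_of_nonpos atLeastAtMost_iff diff_ge_0_iff_ge
          linear minus_diff_eq)
  qed
  show "AE t in lebesgue_on {0..}. (u1 has_real_derivative u2 t) (at t within {0..})"
    using AE_nonneg_not_in[OF J_finite]
    by (rule eventually_mono) (auto intro: has_field_derivative_at_within u1_deriv)
qed

lemma bounded_on_Icc_of_continuous:
  fixes f :: "real \<Rightarrow> real"
  assumes "\<And>t. isCont f t"
  obtains M where "\<And>t. t \<in> {s..t'} \<Longrightarrow> \<bar>f t\<bar> \<le> M"
proof -
  have "bounded (f ` {s..t'})"
    using assms
    by (intro compact_imp_bounded compact_continuous_image continuous_at_imp_continuous_on) auto
  then obtain M where "\<forall>y\<in>f ` {s..t'}. \<bar>y\<bar> \<le> M" unfolding bounded_iff by auto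
  then show ?thesis using that[of M] by auto
qed

lemma damped_solution:
  fixes w w1 q :: "real \<Rightarrow> real" and c Q :: real
  assumes w_deriv: "\<And>t. (w has_real_derivative w1 t) (at t)"
    and w1_cont: "\<And>t. isCont w1 t"
    and w1_deriv: "\<And>t. t \<notin> J \<Longrightarrow> (w1 has_real_derivative - q t * w t) (at t)"
    and J_finite: "\<And>T. finite (J \<inter> {0..T})"
    and q_bounded: "\<And>t. \<bar>q t\<bar> \<le> Q"
  defines "u \<equiv> \<lambda>t. exp (- c * t / 2) * w t"
    and "u1 \<equiv> \<lambda>t. exp (- c * t / 2) * (w1 t - c / 2 * w t)"
  shows "W2inf_loc u u1 (\<lambda>t. - c * u1 t - (c\<^sup>2 / 4 + q t) * u t)"
proof (rule W2inf_loc_intro)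
  have E: "((\<lambda>t. exp (- c * t / 2)) has_real_derivative - c / 2 * exp (- c * t / 2)) (at t)" for t
    by (auto intro!: derivative_eq_intros)
  show u_deriv: "(u has_real_derivative u1 t) (at t)" for t
    unfolding u_def u1_def by (rule DERIV_cong[OF DERIV_mult[OF E w_deriv]]) (simp add: algebra_simps)
  show "(u1 has_real_derivative - c * u1 t - (c\<^sup>2 / 4 + q t) * u t) (at t)" if "t \<notin> J" for t
    unfolding u1_def
    by (rule DERIV_cong[OF DERIV_mult[OF E DERIV_diff[OF w1_deriv[OF that] DERIV_cmult[OF w_deriv]]]])
      (simp add: u_def u1_def field_simps power2_eq_square)
  show u1_cont: "isCont u1 t" for t
    unfolding u1_def using w1_cont DERIV_isCont[OF w_deriv] by (auto intro!: continuous_intros)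
  show "\<exists>K. \<forall>t\<in>{0..T}. \<bar>- c * u1 t - (c\<^sup>2 / 4 + q t) * u t\<bar> \<le> K" for T
  proof -
    obtain M where M: "\<And>t. t \<in> {0..T} \<Longrightarrow> \<bar>u t\<bar> \<le> M"
      using bounded_on_Icc_of_continuous DERIV_isCont[OF u_deriv] by blast
    obtain M1 where M1: "\<And>t. t \<in> {0..T} \<Longrightarrow> \<bar>u1 t\<bar> \<le> M1"
      using bounded_on_Icc_of_continuous u1_cont by blast
    have "\<bar>- c * u1 t - (c\<^sup>2 / 4 + q t) * u t\<bar> \<le> \<bar>c\<bar> * M1 + (c\<^sup>2 / 4 + Q) * M"
      if "t \<in> {0..T}" for t
    proof -
      have "\<bar>c\<^sup>2 / 4 + q t\<bar> \<le> c\<^sup>2 / 4 + Q"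
        using q_bounded[of t] zero_le_power2[of c] unfolding abs_le_iff by linarith
      then have "\<bar>(c\<^sup>2 / 4 + q t) * u t\<bar> \<le> (c\<^sup>2 / 4 + Q) * M"
        unfolding abs_mult using M[OF that] by (intro mult_mono) auto
      moreover have "\<bar>c * u1 t\<bar> \<le> \<bar>c\<bar> * M1"
        unfolding abs_mult using M1[OF that] by (intro mult_left_mono) auto
      ultimately show ?thesis by linarith
    qed
    then show ?thesis by blast
  qed
qed (fact J_finite)

lemma unbounded_of_geometric_growth:
  fixes u :: "real \<Rightarrow> real"
  assumes "r > 1" "\<tau> \<ge> 0" "\<And>n. \<bar>u (real n * \<tau>)\<bar> = r ^ n"
  shows "\<not> (\<exists>M. \<forall>t\<ge>0. \<bar>u t\<bar> \<le> M)"
proof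
  assume "\<exists>M. \<forall>t\<ge>0. \<bar>u t\<bar> \<le> M"
  then obtain M where "\<And>t. t \<ge> 0 \<Longrightarrow> \<bar>u t\<bar> \<le> M" by blast
  moreover obtain n where "M < r ^ n" using real_arch_pow[OF assms(1)] by blast
  ultimately show False
    using assms(2) assms(3)[of n] by (metis not_le of_nat_0_le_iff zero_le_mult_iff)
qed

locale switched_oscillator =
  fixes C :: real
  assumes C_pos: "C > 0"
begin

definition "\<omega> = sqrt (1 + C)"
definition "\<tau>1 = pi / (2 * \<omega>)"
definition "\<tau> = \<tau>1 + pi / 2"

definition "w_cell s = (if s \<le> \<tau>1 then cos (\<omega> * s) else - \<omega> * sin (s - \<tau>1))"
definition "w1_cell s = (if s \<le> \<tau>1 then - \<omega> * sin (\<omega> * s) else - \<omega> * cos (s - \<tau>1))"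
definition "a_cell s = (if s < \<tau>1 then C else 0)"

definition "w = twisted_ext \<tau> (- \<omega>) w_cell"
definition "w1 = twisted_ext \<tau> (- \<omega>) w1_cell"
definition "a t = a_cell (frac_period \<tau> t)"
definition "switch_times = {t. frac_period \<tau> t = 0 \<or> frac_period \<tau> t = \<tau>1}"

lemma omega_gt_1: "\<omega> > 1"
  using C_pos by (simp add: \<omega>_def)

lemma omega_squared: "\<omega> * \<omega> = 1 + C"
  using C_pos by (simp add: \<omega>_def)

lemma omega_tau1: "\<omega> * \<tau>1 = pi / 2"
  using omega_gt_1 by (simp add: \<tau>1_def)

lemma tau1_pos: "\<tau>1 > 0"
  using omega_gt_1 by (simp add: \<tau>1_def)

lemma tau1_lt_half_pi: "\<tau>1 < pi / 2"
  using omega_gt_1 by (simp add: \<tau>1_def field_simps)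

lemma tau1_lt_tau: "\<tau>1 < \<tau>"
  by (simp add: \<tau>_def)

lemma tau_pos: "\<tau> > 0"
  using tau1_pos tau1_lt_tau by linarith

lemma tau_lt_pi: "\<tau> < pi"
  using tau1_lt_half_pi by (simp add: \<tau>_def)

lemma minus_omega_nonzero: "- \<omega> \<noteq> 0"
  using omega_gt_1 by simp

lemma w_base: "0 \<le> s \<Longrightarrow> s < \<tau> \<Longrightarrow> w s = w_cell s"
  unfolding w_def by (rule twisted_ext_base)

lemma w1_base: "0 \<le> s \<Longrightarrow> s < \<tau> \<Longrightarrow> w1 s = w1_cell s"
  unfolding w1_def by (rule twisted_ext_base)

lemma w_has_derivative_base:
  assumes "0 \<le> s" "s < \<tau>" shows "(w has_real_derivative w1_cell s) (at s)"
proof -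
  obtain e where e: "e > 0" "e \<le> \<tau>1" "e \<le> pi / 2"
    using tau1_pos by (intro that[of "min \<tau>1 (pi / 2)"]) auto
  consider "s = 0" | "0 < s" "s < \<tau>1" | "s = \<tau>1" | "\<tau>1 < s" using assms by linarith
  then show ?thesis
  proof cases
    case 1
    show ?thesis unfolding 1
    proof (rule has_real_derivative_glue[where g = cos and h = "\<lambda>x. cos (\<omega> * x)", OF _ _ e(1)])
      fix y assume y: "0 - e < y" "y \<le> 0"
      show "w y = cos y"
      proof (cases "y = 0")
        case False
        then have "w y = inverse (- \<omega>) * (- \<omega> * sin (y + pi / 2))"
          using y e tau1_pos minus_omega_nonzero
          by (simp add: w_def twisted_ext_before_0 w_cell_def \<tau>_def)
        then show ?thesis using omega_gt_1 by (simp add: sin_add)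
      qed (use tau_pos tau1_pos in \<open>simp add: w_base w_cell_def\<close>)
    next
      fix y assume "0 \<le> y" "y < 0 + e"
      then show "w y = cos (\<omega> * y)" using e tau1_lt_tau by (simp add: w_base w_cell_def)
    qed (use tau1_pos in \<open>auto intro!: derivative_eq_intros simp: w1_cell_def\<close>)
  next
    case 2
    have "((\<lambda>x. cos (\<omega> * x)) has_real_derivative w1_cell s) (at s)"
      using 2 by (auto intro!: derivative_eq_intros simp: w1_cell_def)
    then show ?thesis
      by (rule has_field_derivative_transform_within_open[where S = "{0<..<\<tau>1}"])
        (use 2 tau1_lt_tau in \<open>auto simp: w_base w_cell_def\<close>)
  next
    case 3
    show ?thesis unfolding 3
    proof (rule has_real_derivative_glue[where g = "\<lambda>x. cos (\<omega> * x)"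
          and h = "\<lambda>x. - \<omega> * sin (x - \<tau>1)", OF _ _ e(1)])
      fix y assume "\<tau>1 - e < y" "y \<le> \<tau>1"
      then show "w y = cos (\<omega> * y)" using e tau1_lt_tau by (simp add: w_base w_cell_def)
    next
      fix y assume "\<tau>1 \<le> y" "y < \<tau>1 + e"
      then show "w y = - \<omega> * sin (y - \<tau>1)" using e tau1_pos
        by (simp add: w_base w_cell_def omega_tau1 \<tau>_def)
    qed (auto intro!: derivative_eq_intros simp: w1_cell_def omega_tau1)
  next
    case 4
    have "((\<lambda>x. - \<omega> * sin (x - \<tau>1)) has_real_derivative w1_cell s) (at s)"
      using 4 by (auto intro!: derivative_eq_intros simp: w1_cell_def)
    then show ?thesis
      by (rule has_field_derivative_transform_within_open[where S = "{\<tau>1<..<\<tau>}"])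
        (use 4 assms tau1_pos in \<open>auto simp: w_base w_cell_def\<close>)
  qed
qed

lemma w_has_derivative: "(w has_real_derivative w1 t) (at t)"
proof -
  have "(w has_real_derivative w1_cell (frac_period \<tau> t)) (at (frac_period \<tau> t))"
    using frac_period_bounds[OF tau_pos] by (intro w_has_derivative_base) auto
  then have "(w has_real_derivative (- \<omega>) powi \<lfloor>t / \<tau>\<rfloor> * w1_cell (frac_period \<tau> t)) (at t)"
    unfolding w_def by (rule twisted_ext_has_derivative[OF tau_pos minus_omega_nonzero])
  then show ?thesis by (simp add: w1_def twisted_ext_def)
qed

lemma w1_has_derivative_base:
  assumes "0 < s" "s < \<tau>" "s \<noteq> \<tau>1"
  shows "(w1 has_real_derivative - (1 + a_cell s) * w_cell s) (at s)"
proof (cases "s < \<tau>1")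
  case True
  have "((\<lambda>x. - \<omega> * sin (\<omega> * x)) has_real_derivative - (1 + a_cell s) * w_cell s) (at s)"
    using True by (auto intro!: derivative_eq_intros simp: a_cell_def w_cell_def omega_squared[symmetric])
  then show ?thesis
    by (rule has_field_derivative_transform_within_open[where S = "{0<..<\<tau>1}"])
      (use True assms tau1_lt_tau in \<open>auto simp: w1_base w1_cell_def\<close>)
next
  case False
  then have "\<tau>1 < s" using assms by simp
  have "((\<lambda>x. - \<omega> * cos (x - \<tau>1)) has_real_derivative - (1 + a_cell s) * w_cell s) (at s)"
    using \<open>\<tau>1 < s\<close> by (auto intro!: derivative_eq_intros simp: a_cell_def w_cell_def)
  then show ?thesis
    by (rule has_field_derivative_transform_within_open[where S = "{\<tau>1<..<\<tau>}"])
      (use \<open>\<tau>1 < s\<close> assms tau1_pos in \<open>auto simp: w1_base w1_cell_def\<close>)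
qed

lemma w1_isCont_base:
  assumes "0 \<le> s" "s < \<tau>" shows "isCont w1 s"
proof -
  obtain e where e: "e > 0" "e \<le> \<tau>1" "e \<le> pi / 2"
    using tau1_pos by (intro that[of "min \<tau>1 (pi / 2)"]) auto
  consider "s = 0" | "s = \<tau>1" | "0 < s" "s \<noteq> \<tau>1" using assms by linarith
  then show ?thesis
  proof cases
    case 1
    show ?thesis unfolding 1
    proof (rule isCont_glue[where g = "\<lambda>x. - sin x" and h = "\<lambda>x. - \<omega> * sin (\<omega> * x)", OF _ _ _ e(1)])
      fix y assume y: "0 - e < y" "y \<le> 0"
      show "w1 y = - sin y"
      proof (cases "y = 0")
        case False
        then have "w1 y = inverse (- \<omega>) * (- \<omega> * cos (y + pi / 2))"
          using y e tau1_pos minus_omega_nonzero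
          by (simp add: w1_def twisted_ext_before_0 w1_cell_def \<tau>_def)
        then show ?thesis using omega_gt_1 by (simp add: cos_add)
      qed (use tau_pos tau1_pos in \<open>simp add: w1_base w1_cell_def\<close>)
    next
      fix y assume "0 \<le> y" "y < 0 + e"
      then show "w1 y = - \<omega> * sin (\<omega> * y)" using e tau1_lt_tau by (simp add: w1_base w1_cell_def)
    qed (auto intro!: continuous_intros)
  next
    case 2
    show ?thesis unfolding 2
    proof (rule isCont_glue[where g = "\<lambda>x. - \<omega> * sin (\<omega> * x)"
          and h = "\<lambda>x. - \<omega> * cos (x - \<tau>1)", OF _ _ _ e(1)])
      fix y assume "\<tau>1 - e < y" "y \<le> \<tau>1"
      then show "w1 y = - \<omega> * sin (\<omega> * y)" using e tau1_lt_tau by (simp add: w1_base w1_cell_def)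
    next
      fix y assume "\<tau>1 \<le> y" "y < \<tau>1 + e"
      then show "w1 y = - \<omega> * cos (y - \<tau>1)" using e tau1_pos
        by (simp add: w1_base w1_cell_def omega_tau1 \<tau>_def)
    qed (auto intro!: continuous_intros simp: omega_tau1)
  next
    case 3
    show ?thesis by (rule DERIV_isCont[OF w1_has_derivative_base]) (use 3 assms in auto)
  qed
qed

lemma w1_isCont: "isCont w1 t"
proof -
  have "isCont w1 (frac_period \<tau> t)"
    using frac_period_bounds[OF tau_pos] by (intro w1_isCont_base) auto
  then show ?thesis
    unfolding w1_def by (rule twisted_ext_isCont[OF tau_pos minus_omega_nonzero])
qed

lemma w1_has_derivative:
  assumes "t \<notin> switch_times" shows "(w1 has_real_derivative - (1 + a t) * w t) (at t)"
proof -
  have "0 < frac_period \<tau> t" "frac_period \<tau> t < \<tau>" "frac_period \<tau> t \<noteq> \<tau>1"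
    using assms frac_period_bounds[OF tau_pos, of t] by (auto simp: switch_times_def)
  then have "(w1 has_real_derivative - (1 + a_cell (frac_period \<tau> t)) * w_cell (frac_period \<tau> t))
      (at (frac_period \<tau> t))"
    by (rule w1_has_derivative_base)
  then have "(w1 has_real_derivative
      (- \<omega>) powi \<lfloor>t / \<tau>\<rfloor> * (- (1 + a_cell (frac_period \<tau> t)) * w_cell (frac_period \<tau> t))) (at t)"
    unfolding w1_def by (rule twisted_ext_has_derivative[OF tau_pos minus_omega_nonzero])
  then show ?thesis by (simp add: w_def twisted_ext_def a_def algebra_simps)
qed

lemma switch_times_finite: "finite (switch_times \<inter> {0..T})"
proof -
  let ?K = "{0..\<lfloor>T / \<tau>\<rfloor>}"
  have "switch_times \<inter> {0..T} \<subseteq> (\<lambda>k. of_int k * \<tau>) ` ?K \<union> (\<lambda>k. \<tau>1 + of_int k * \<tau>) ` ?K"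
  proof
    fix x assume x: "x \<in> switch_times \<inter> {0..T}"
    define k where "k = \<lfloor>x / \<tau>\<rfloor>"
    have "0 \<le> k" "k \<le> \<lfloor>T / \<tau>\<rfloor>"
      using x tau_pos by (auto simp: k_def intro!: floor_mono divide_right_mono)
    moreover have "x = frac_period \<tau> x + of_int k * \<tau>" by (simp add: frac_period_def k_def)
    ultimately show "x \<in> (\<lambda>k. of_int k * \<tau>) ` ?K \<union> (\<lambda>k. \<tau>1 + of_int k * \<tau>) ` ?K"
      using x unfolding switch_times_def by (auto intro!: image_eqI[where x = k])
  qed
  then show ?thesis by (rule finite_subset) auto
qed

lemma a_bounds: "0 \<le> a t" "a t \<le> C"
  using C_pos by (simp_all add: a_def a_cell_def)

lemma a_measurable: "a \<in> borel_measurable (lebesgue_on {0..})"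
proof -
  have "a \<in> borel_measurable borel" unfolding a_def a_cell_def frac_period_def by measurable
  then show ?thesis by (intro measurable_restrict_space1 measurable_completion) simp
qed

lemma w_at_periods: "w (real n * \<tau>) = (- \<omega>) ^ n"
  using twisted_ext_add_periods[OF tau_pos minus_omega_nonzero, of w_cell 0 "int n"]
    w_base[of 0] tau_pos tau1_pos by (simp add: w_def w_cell_def)

end

context switched_oscillator
begin

lemma damped_growth_factor:
  assumes "c \<ge> 0" "exp (c * pi) < 1 + C"
  shows "\<omega> * exp (- c * \<tau> / 2) > 1"
proof -
  have "exp (c * \<tau> / 2) \<le> exp (c * pi / 2)"
    using assms(1) tau_lt_pi by (simp add: mult_left_mono)
  also have "exp (c * pi / 2) = sqrt (exp (c * pi))"
  proof -
    have "exp (c * pi) = exp (c * pi / 2) ^ 2" by (simp add: power2_eq_square exp_add[symmetric])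
    then show ?thesis by simp
  qed
  also have "\<dots> < \<omega>"
    using assms(2) by (simp add: \<omega>_def)
  finally show ?thesis by (simp add: exp_minus field_simps)
qed

lemma damped_w_at_periods:
  "\<bar>exp (- c * (real n * \<tau>) / 2) * w (real n * \<tau>)\<bar> = (\<omega> * exp (- c * \<tau> / 2)) ^ n"
proof -
  have E: "exp (- c * (real n * \<tau>) / 2) = exp (- c * \<tau> / 2) ^ n"
    by (simp add: exp_of_nat_mult[symmetric] algebra_simps)
  have W: "\<bar>w (real n * \<tau>)\<bar> = \<omega> ^ n"
    using omega_gt_1 by (simp add: w_at_periods power_abs)
  show ?thesis
    unfolding abs_mult abs_exp_cancel E W by (simp add: power_mult_distrib)
qed

end

lemma parameter_choice:
  fixes \<epsilon> :: real
  assumes "\<epsilon> > 0"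
  obtains c C :: real where "0 < c" "0 < C" "C < (pi + \<epsilon>) * c" "exp (c * pi) < 1 + C"
proof -
  define \<delta> where "\<delta> = min \<epsilon> 1 / 2"
  define c where "c = \<delta> / 10"
  have \<delta>: "0 < \<delta>" "\<delta> < \<epsilon>" "\<delta> \<le> 1 / 2" using assms by (auto simp: \<delta>_def)
  then have c: "0 < c" "c \<le> 1 / 20" by (auto simp: c_def)
  then have "c * pi \<le> 1 / 20 * 4"
    using pi_less_4 pi_gt_zero by (intro mult_mono) auto
  then have "c * pi \<le> 1" by simp
  have "pi * pi < 10"
    using pi_approx(2) pi_gt_zero mult_mono[of pi "3.15" pi "3.15"] by simp
  then have "\<delta> * (pi * pi) < \<delta> * 10" using \<delta>(1) by (rule mult_strict_left_mono)
  moreover have "c * (pi * pi) = \<delta> * (pi * pi) / 10" by (simp add: c_def)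
  ultimately have "c * (pi * pi) < \<delta>" by linarith
  have "exp (c * pi) \<le> 1 + c * pi + (c * pi)\<^sup>2"
    using c(1) \<open>c * pi \<le> 1\<close> by (intro exp_bound) auto
  also have "\<dots> < 1 + (pi + \<delta>) * c"
    using \<open>c * (pi * pi) < \<delta>\<close> c(1) by (simp add: power2_eq_square algebra_simps)
  finally have "exp (c * pi) < 1 + (pi + \<delta>) * c" .
  moreover have "0 < (pi + \<delta>) * c"
    using c(1) \<delta>(1) pi_gt_zero by (intro mult_pos_pos) linarith+
  moreover have "(pi + \<delta>) * c < (pi + \<epsilon>) * c"
    using c(1) \<delta>(2) by simp
  ultimately show ?thesis using c(1) that by blast
qed

lemma underdamped_parameters:
  fixes c C \<epsilon> :: real
  assumes "0 < c" "0 < \<epsilon>" "C < (pi + \<epsilon>) * c"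
  defines "b \<equiv> 1 + c\<^sup>2 / 4"
  shows "b > 1" "c < 2 * sqrt b" "C < (pi + \<epsilon>) * c * sqrt b"
proof -
  have "1 \<le> sqrt b" "c\<^sup>2 < (2 * sqrt b)\<^sup>2"
    using assms(1) by (simp_all add: b_def power_mult_distrib)
  then show "b > 1" "c < 2 * sqrt b"
    using assms(1) by (auto simp: b_def intro: power2_less_imp_less)
  have "0 < (pi + \<epsilon>) * c" using assms(1,2) pi_gt_zero by (intro mult_pos_pos) linarith+
  then show "C < (pi + \<epsilon>) * c * sqrt b"
    using assms(3) \<open>1 \<le> sqrt b\<close> mult_le_cancel_left1[of "(pi + \<epsilon>) * c" "sqrt b"] by linarith
qed

theorem theorem2p2:
  fixes \<epsilon> :: real
  assumes "\<epsilon> > 0"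
  shows "\<exists>b c C :: real. \<exists>a :: real \<Rightarrow> real.
           b > 1 \<and> 0 < c \<and> c < 2 * sqrt b \<and> C > 0 \<and> C < (pi + \<epsilon>) * c * sqrt b \<and>
           a \<in> borel_measurable (lebesgue_on {0..}) \<and>
           (AE t in lebesgue_on {0..}. 0 \<le> a t \<and> a t \<le> C) \<and>
           (\<exists>u u1 u2. W2inf_loc u u1 u2 \<and>
              (AE t in lebesgue_on {0..}. u2 t + c * u1 t + (b + a t) * u t = 0) \<and>
              \<not> (\<exists>M. \<forall>t\<ge>0. \<bar>u t\<bar> \<le> M))"
proof -
  obtain c C where c: "0 < c" and C: "0 < C" "C < (pi + \<epsilon>) * c" "exp (c * pi) < 1 + C"
    using parameter_choice[OF assms] .
  interpret switched_oscillator C by unfold_locales (fact C(1))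
  define b where "b = 1 + c\<^sup>2 / 4"
  note b = underdamped_parameters[OF c assms C(2), folded b_def]
  define u where "u = (\<lambda>t. exp (- c * t / 2) * w t)"
  define u1 where "u1 = (\<lambda>t. exp (- c * t / 2) * (w1 t - c / 2 * w t))"
  define u2 where "u2 = (\<lambda>t. - c * u1 t - (c\<^sup>2 / 4 + (1 + a t)) * u t)"
  have "W2inf_loc u u1 u2"
    unfolding u_def u1_def u2_def using a_bounds
    by (intro damped_solution[OF w_has_derivative w1_isCont w1_has_derivative switch_times_finite,
          where Q = "1 + C"]) auto
  have u_periods: "\<bar>u (real n * \<tau>)\<bar> = (\<omega> * exp (- c * \<tau> / 2)) ^ n" for n
    using damped_w_at_periods by (simp add: u_def)
  have "\<not> (\<exists>M. \<forall>t\<ge>0. \<bar>u t\<bar> \<le> M)"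
    using c by (intro unbounded_of_geometric_growth[OF damped_growth_factor[OF _ C(3)] _ u_periods])
      (auto intro: less_imp_le tau_pos)
  show ?thesis
  proof (intro exI conjI)
    show "a \<in> borel_measurable (lebesgue_on {0..})" by (rule a_measurable)
    show "AE t in lebesgue_on {0..}. 0 \<le> a t \<and> a t \<le> C" using a_bounds by simp
    show "AE t in lebesgue_on {0..}. u2 t + c * u1 t + (b + a t) * u t = 0"
      by (simp add: u2_def b_def algebra_simps)
  qed fact+
qed

end
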